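(* For all integers $1\le k<N$, $$\alpha\bigl(P^{\mathsf{cc}}_{k,N}\bigr)\;\ge\;\frac{1}{19}\,\alpha\bigl(P^{\mathsf{ucc}}_{k,N}\bigr).$$
   Context: $\Theta_{k,N}$ denotes the set of $k$-tuples $(x_1,\dots,x_k)\in[N]^k$ with pairwise distinct entries. Standard $k$-clique $N$-coloring chain $P^{\mathsf{cc}}_{k,N}$: the Markov chain on $\Theta_{k,N}$ which from state $x=(x_1,\dots,x_k)$ samples $\boldsymbol i\in[k]$ uniformly and then $\boldsymbol\ell$ uniformly from $\{\ell\in[N]:\ell\notin\{x_1,\dots,x_k\}\}\cup\{x_{\boldsymbol i}\}$ (a set of size $N-k+1$), and moves to $x$ with its $\boldsymbol i$-th entry replaced by $\boldsymbol\ell$. Uniform $k$-clique $N$-coloring chain $P^{\mathsf{ucc}}_{k,N}$: for $x\in\Theta_{k,N}$, $i\in[k]$, $\ell\in[N]$, let $x^{i,\ell}$ be $x$ with the $i$-th entry replaced by $\ell$ if $\ell\notin\{x_1,\dots,x_k\}$, and $x$ with the entries in positions $i$ and $j$ swapped if $\ell=x_j$. The chain moves from $x$ to $x^{\boldsymbol i,\boldsymbol\ell}$ with $\boldsymbol i\in[k]$, $\boldsymbol\ell\in[N]$ uniform and independent. Both chains have the uniform stationary distribution on $\Theta_{k,N}$. Log-Sobolev constant: for an ergodic Markov chain with transition matrix $P$ on finite state space $V$ with stationary distribution $\pi$, $\mathcal E_P(g,g)=\frac12\sum_{x,y\in V}(g(x)-g(y))^2\pi(x)P(x,y)$; for $f:V\to\mathbb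 R_{\ge 0}$, $\mathrm{Ent}_\pi[f]=\sum_{x}\pi(x)f(x)\log\frac{f(x)}{\mathbb E_\pi[f]}$ (natural log); and $\alpha(P)=\inf\{\mathcal E_P(\sqrt f,\sqrt f)/\mathrm{Ent}_\pi[f] : f\ge 0,\ f \text{ non-constant}\}$. *)

theory Defs
  imports Complex_Main
begin

definition dirichlet_form ::
  "'a set \<Rightarrow> ('a \<Rightarrow> real) \<Rightarrow> ('a \<Rightarrow> 'a \<Rightarrow> real) \<Rightarrow> ('a \<Rightarrow> real) \<Rightarrow> real" where
  "dirichlet_form V \<pi> P g =
     (1/2) * (\<Sum>x\<in>V. \<Sum>y\<in>V. (g x - g y)^2 * \<pi> x * P x y)"

definition expect :: "'a set \<Rightarrow> ('a \<Rightarrow> real) \<Rightarrow> ('a \<Rightarrow> real) \<Rightarrow> real" where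
  "expect V \<pi> f = (\<Sum>x\<in>V. \<pi> x * f x)"

definition entropy :: "'a set \<Rightarrow> ('a \<Rightarrow> real) \<Rightarrow> ('a \<Rightarrow> real) \<Rightarrow> real" where
  "entropy V \<pi> f =
     (\<Sum>x\<in>V. \<pi> x * (if f x = 0 then 0 else f x * ln (f x / expect V \<pi> f)))"

definition log_sobolev ::
  "'a set \<Rightarrow> ('a \<Rightarrow> real) \<Rightarrow> ('a \<Rightarrow> 'a \<Rightarrow> real) \<Rightarrow> real" where
  "log_sobolev V \<pi> P =
     Inf {dirichlet_form V \<pi> P (\<lambda>x. sqrt (f x)) / entropy V \<pi> f | f.
            (\<forall>x\<in>V. f x \<ge> 0) \<and> (\<exists>x\<in>V. \<exists>y\<in>V. f x \<noteq> f y)}"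

definition uniform_dist :: "'a set \<Rightarrow> 'a \<Rightarrow> real" where
  "uniform_dist V x = 1 / real (card V)"

definition Theta :: "nat \<Rightarrow> nat \<Rightarrow> nat list set" where
  "Theta k N = {xs. length xs = k \<and> distinct xs \<and> set xs \<subseteq> {1..N}}"

text \<open>Standard chain: pick i uniform in [k] (index i < k), then l uniform in
  ([N] - {x_1..x_k}) \<union> {x_i} (size N-k+1), replace i-th entry by l.\<close>
definition P_cc :: "nat \<Rightarrow> nat \<Rightarrow> nat list \<Rightarrow> nat list \<Rightarrow> real" where
  "P_cc k N x y =
     (\<Sum>i<k. \<Sum>l\<in>({1..N} - set x) \<union> {x ! i}.
        if x[i := l] = y then 1 / (real k * (real N - real k + 1)) else 0)"

definition ucc_move :: "nat list \<Rightarrow> nat \<Rightarrow> nat \<Rightarrow> nat list" where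
  "ucc_move x i l =
     (if l \<notin> set x then x[i := l]
      else (let j = (THE j. j < length x \<and> x ! j = l) in x[i := x ! j, j := x ! i]))"

definition P_ucc :: "nat \<Rightarrow> nat \<Rightarrow> nat list \<Rightarrow> nat list \<Rightarrow> real" where
  "P_ucc k N x y =
     (\<Sum>i<k. \<Sum>l\<in>{1..N}. if ucc_move x i l = y then 1 / (real k * real N) else 0)"

end

theory Submission
  imports Defs
begin

text \<open>Under the uniform distribution both Dirichlet forms are built from two energies of g:
  the recolor energy S (change one entry to a color not in use) and the swap energy W
  (exchange two entries).  Up to the common factor 1/(2|Theta|k), the standard chain has
  Dirichlet form S/(N-k+1) and the uniform one (S+W)/N.  A swap of entries i and j is
  simulated by three recolorings through a free color l,
  x \<rightarrow> x[i:=l] \<rightarrow> x[i:=l, j:=x_i] \<rightarrow> swap x i j;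
  averaging over the N-k free colors, and noting that each recoloring is used k times,
  gives (N-k) W \<le> 9 k S, whence the uniform Dirichlet form is at most 19 times the
  standard one.  Both chains have the same entropy functional, so the log-Sobolev
  constants compare with the same factor.\<close>

lemma entropy_nonneg:
  assumes "finite V" "\<forall>x\<in>V. \<pi> x \<ge> 0" "sum \<pi> V = 1" "\<forall>x\<in>V. f x \<ge> 0"
  shows "entropy V \<pi> f \<ge> 0"
proof -
  define E where "E = expect V \<pi> f"
  have E_nonneg: "E \<ge> 0"
    unfolding E_def expect_def using assms by (intro sum_nonneg) auto
  show ?thesis
  proof (cases "E = 0")
    case True
    then have "\<forall>x\<in>V. \<pi> x * f x = 0"
      using assms unfolding E_def expect_def by (subst sum_nonneg_eq_0_iff[symmetric]) auto
    then show ?thesis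
      unfolding entropy_def by (intro sum_nonneg) auto
  next
    case False
    have pointwise: "\<pi> x * (f x - E) \<le> \<pi> x * (if f x = 0 then 0 else f x * ln (f x / E))"
      if "x \<in> V" for x
    proof -
      have "f x - E \<le> f x * ln (f x / E)" if "f x > 0"
      proof -
        have "ln (E / f x) \<le> E / f x - 1"
          using \<open>f x > 0\<close> E_nonneg False by (intro ln_le_minus_one) auto
        moreover have "ln (f x / E) = - ln (E / f x)"
          using \<open>f x > 0\<close> E_nonneg False by (simp add: ln_div)
        ultimately have "f x * (1 - E / f x) \<le> f x * ln (f x / E)"
          using \<open>f x > 0\<close> by (intro mult_left_mono) auto
        then show ?thesis
          using \<open>f x > 0\<close> by (simp add: algebra_simps)
      qed
      then show ?thesis
        using assms \<open>x \<in> V\<close> E_nonneg by (intro mult_left_mono) (auto simp: less_eq_real_def)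
    qed
    have "0 = E - sum \<pi> V * E"
      using assms by simp
    also have "\<dots> = (\<Sum>x\<in>V. \<pi> x * (f x - E))"
      unfolding E_def expect_def by (simp add: right_diff_distrib sum_subtractf sum_distrib_right)
    also have "\<dots> \<le> (\<Sum>x\<in>V. \<pi> x * (if f x = 0 then 0 else f x * ln (f x / E)))"
      by (rule sum_mono) (rule pointwise)
    finally show ?thesis
      unfolding entropy_def E_def[symmetric] .
  qed
qed

lemma dirichlet_form_nonneg:
  assumes "\<forall>x\<in>V. \<pi> x \<ge> 0" "\<forall>x\<in>V. \<forall>y\<in>V. P x y \<ge> 0"
  shows "dirichlet_form V \<pi> P g \<ge> 0"
  unfolding dirichlet_form_def using assms by (intro mult_nonneg_nonneg sum_nonneg) auto

lemma log_sobolev_comparison: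
  assumes "finite V" "\<forall>x\<in>V. \<pi> x \<ge> 0" "sum \<pi> V = 1"
    and "\<exists>x\<in>V. \<exists>y\<in>V. x \<noteq> y"
    and "\<forall>x\<in>V. \<forall>y\<in>V. Q x y \<ge> 0"
    and "c > 0"
    and comparison: "\<And>g. dirichlet_form V \<pi> Q g \<le> c * dirichlet_form V \<pi> P g"
  shows "(1/c) * log_sobolev V \<pi> Q \<le> log_sobolev V \<pi> P"
proof -
  define ratios where "ratios R = {dirichlet_form V \<pi> R (\<lambda>x. sqrt (f x)) / entropy V \<pi> f | f.
    (\<forall>x\<in>V. f x \<ge> 0) \<and> (\<exists>x\<in>V. \<exists>y\<in>V. f x \<noteq> f y)}" for R
  obtain x0 y0 where "x0 \<in> V" "y0 \<in> V" "x0 \<noteq> y0"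
    using assms(4) by blast
  define f0 :: "'a \<Rightarrow> real" where "f0 x = (if x = x0 then 1 else 0)" for x
  have "(\<forall>x\<in>V. f0 x \<ge> 0) \<and> (\<exists>x\<in>V. \<exists>y\<in>V. f0 x \<noteq> f0 y)"
    using \<open>x0 \<in> V\<close> \<open>y0 \<in> V\<close> \<open>x0 \<noteq> y0\<close> unfolding f0_def by auto
  then have nonempty: "ratios P \<noteq> {}"
    unfolding ratios_def by blast
  have bdd: "bdd_below (ratios Q)"
    unfolding ratios_def
    using dirichlet_form_nonneg[OF assms(2,5)] entropy_nonneg[OF assms(1-3)]
    by (intro bdd_belowI[of _ 0]) (auto intro: divide_nonneg_nonneg)
  have "(1/c) * Inf (ratios Q) \<le> r" if "r \<in> ratios P" for r
  proof -
    obtain f where r: "r = dirichlet_form V \<pi> P (\<lambda>x. sqrt (f x)) / entropy V \<pi> f"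
      and f: "\<forall>x\<in>V. f x \<ge> 0" "\<exists>x\<in>V. \<exists>y\<in>V. f x \<noteq> f y"
      using \<open>r \<in> ratios P\<close> unfolding ratios_def by blast
    have "Inf (ratios Q) \<le> dirichlet_form V \<pi> Q (\<lambda>x. sqrt (f x)) / entropy V \<pi> f"
      using f by (intro cInf_lower[OF _ bdd]) (auto simp: ratios_def)
    also have "\<dots> \<le> c * r"
      unfolding r times_divide_eq_right
      using comparison entropy_nonneg[OF assms(1-3) f(1)] by (rule divide_right_mono)
    finally show ?thesis
      using \<open>c > 0\<close> by (simp add: field_simps)
  qed
  then show ?thesis
    unfolding log_sobolev_def ratios_def[symmetric] by (intro cInf_greatest[OF nonempty])
qed

lemma sum_uniform_dist: "finite V \<Longrightarrow> V \<noteq> {} \<Longrightarrow> sum (uniform_dist V) V = 1"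
  by (simp add: uniform_dist_def)

lemma sum_move_kernel:
  fixes h :: "'a \<Rightarrow> real"
  assumes "finite V" "\<And>i l. i \<in> I \<Longrightarrow> l \<in> L i \<Longrightarrow> m i l \<in> V"
  shows "(\<Sum>y\<in>V. h y * (\<Sum>i\<in>I. \<Sum>l\<in>L i. if m i l = y then c else 0)) =
    c * (\<Sum>i\<in>I. \<Sum>l\<in>L i. h (m i l))"
proof -
  have "h y * (if m i l = y then c else 0) = (if m i l = y then c * h y else 0)" for y i l
    by simp
  then have "(\<Sum>y\<in>V. h y * (\<Sum>i\<in>I. \<Sum>l\<in>L i. if m i l = y then c else 0)) =
      (\<Sum>y\<in>V. \<Sum>i\<in>I. \<Sum>l\<in>L i. if m i l = y then c * h y else 0)"
    by (simp add: sum_distrib_left)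
  also have "\<dots> = (\<Sum>i\<in>I. \<Sum>l\<in>L i. \<Sum>y\<in>V. if m i l = y then c * h y else 0)"
    by (subst sum.swap, rule sum.cong[OF refl], rule sum.swap)
  also have "\<dots> = (\<Sum>i\<in>I. \<Sum>l\<in>L i. c * h (m i l))"
    using assms by (intro sum.cong refl) (simp add: sum.delta')
  finally show ?thesis
    by (simp add: sum_distrib_left)
qed

lemma dirichlet_form_uniform_move_kernel:
  assumes "finite V"
    and kernel: "\<And>x y. x \<in> V \<Longrightarrow> P x y = (\<Sum>i\<in>I. \<Sum>l\<in>L x i. if m x i l = y then c else 0)"
    and moves: "\<And>x i l. x \<in> V \<Longrightarrow> i \<in> I \<Longrightarrow> l \<in> L x i \<Longrightarrow> m x i l \<in> V"
  shows "dirichlet_form V (uniform_dist V) P g =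
    c / (2 * real (card V)) * (\<Sum>x\<in>V. \<Sum>i\<in>I. \<Sum>l\<in>L x i. (g x - g (m x i l))^2)"
proof -
  have "(\<Sum>y\<in>V. (g x - g y)^2 * P x y) = c * (\<Sum>i\<in>I. \<Sum>l\<in>L x i. (g x - g (m x i l))^2)"
    if "x \<in> V" for x
    using sum_move_kernel[OF \<open>finite V\<close> moves[OF that]] kernel[OF that] by simp
  then have "(\<Sum>x\<in>V. \<Sum>y\<in>V. (g x - g y)^2 * P x y) =
      c * (\<Sum>x\<in>V. \<Sum>i\<in>I. \<Sum>l\<in>L x i. (g x - g (m x i l))^2)"
    by (simp add: sum_distrib_left)
  moreover have "dirichlet_form V (uniform_dist V) P g =
      (\<Sum>x\<in>V. \<Sum>y\<in>V. (g x - g y)^2 * P x y) / (2 * real (card V))"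
    unfolding dirichlet_form_def uniform_dist_def by (simp add: sum_divide_distrib ac_simps)
  ultimately show ?thesis
    by simp
qed

definition swap_entries :: "'a list \<Rightarrow> nat \<Rightarrow> nat \<Rightarrow> 'a list" where
  "swap_entries x i j = x[i := x ! j, j := x ! i]"

lemma finite_Theta: "finite (Theta k N)"
proof -
  have "Theta k N \<subseteq> {xs. set xs \<subseteq> {1..N} \<and> length xs = k}"
    by (auto simp: Theta_def)
  then show ?thesis
    by (rule finite_subset) (simp add: finite_lists_length_eq)
qed

lemma Theta_length: "x \<in> Theta k N \<Longrightarrow> length x = k"
  by (simp add: Theta_def)

lemma card_Theta_free_colors:
  "x \<in> Theta k N \<Longrightarrow> card ({1..N} - set x) = N - k"
  by (simp add: Theta_def card_Diff_subset distinct_card)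

lemma list_update_in_Theta:
  assumes "x \<in> Theta k N" "i < k" "l \<in> ({1..N} - set x) \<union> {x ! i}"
  shows "x[i := l] \<in> Theta k N"
  using assms set_update_subset_insert[of x i l] distinct_list_update[of x l i]
  by (auto simp: Theta_def)

lemma swap_entries_in_Theta:
  "x \<in> Theta k N \<Longrightarrow> i < k \<Longrightarrow> j < k \<Longrightarrow> swap_entries x i j \<in> Theta k N"
  by (auto simp: Theta_def swap_entries_def)

lemma swap_entries_involution:
  "i < length x \<Longrightarrow> j < length x \<Longrightarrow> swap_entries (swap_entries x i j) i j = x"
  by (cases "i = j") (auto simp: swap_entries_def list_eq_iff_nth_eq nth_list_update)

lemma swap_entries_list_update:
  "i \<noteq> j \<Longrightarrow> (swap_entries x i j)[i := l] = x[i := l, j := x ! i]"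
  by (simp add: swap_entries_def list_update_swap)

lemma Theta_two_distinct:
  assumes "1 \<le> k" "k < N"
  shows "\<exists>x\<in>Theta k N. \<exists>y\<in>Theta k N. x \<noteq> y"
proof -
  define x where "x = [1..<k+1]"
  have x: "x \<in> Theta k N"
    unfolding x_def Theta_def using assms by auto
  have "x[0 := N] \<in> Theta k N"
    using list_update_in_Theta[OF x, of 0 N] assms unfolding x_def by auto
  moreover have "x[0 := N] ! 0 \<noteq> x ! 0"
    using assms unfolding x_def by (simp del: upt_Suc)
  ultimately show ?thesis
    using x by metis
qed

lemma ucc_move_fresh: "l \<notin> set x \<Longrightarrow> ucc_move x i l = x[i := l]"
  by (simp add: ucc_move_def)

lemma ucc_move_entry:
  assumes "x \<in> Theta k N" "j < k"
  shows "ucc_move x i (x ! j) = swap_entries x i j"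
proof -
  have "distinct x" "length x = k"
    using assms by (auto simp: Theta_def)
  then have "(THE j'. j' < length x \<and> x ! j' = x ! j) = j"
    using assms by (intro the_equality) (auto simp: nth_eq_iff_index_eq)
  then show ?thesis
    using assms \<open>length x = k\<close> by (simp add: ucc_move_def swap_entries_def Let_def)
qed

lemma sum_ucc_moves:
  assumes x: "x \<in> Theta k N"
  shows "(\<Sum>l\<in>{1..N}. h (ucc_move x i l)) =
     (\<Sum>l\<in>{1..N} - set x. h (x[i := l])) + (\<Sum>j<k. h (swap_entries x i j))"
proof -
  have "set x \<subseteq> {1..N}" "distinct x" "length x = k"
    using x by (auto simp: Theta_def)
  have "(\<Sum>l\<in>{1..N}. h (ucc_move x i l)) =
      (\<Sum>l\<in>{1..N} - set x. h (ucc_move x i l)) + (\<Sum>l\<in>set x. h (ucc_move x i l))"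
    using \<open>set x \<subseteq> {1..N}\<close> by (metis finite_atLeastAtMost sum.subset_diff)
  also have "(\<Sum>l\<in>{1..N} - set x. h (ucc_move x i l)) = (\<Sum>l\<in>{1..N} - set x. h (x[i := l]))"
    by (simp add: ucc_move_fresh)
  also have "(\<Sum>l\<in>set x. h (ucc_move x i l)) = (\<Sum>j<k. h (ucc_move x i (x ! j)))"
  proof -
    have "set x = (!) x ` {..<k}" "inj_on ((!) x) {..<k}"
      using \<open>distinct x\<close> \<open>length x = k\<close>
      by (auto simp: in_set_conv_nth inj_on_def nth_eq_iff_index_eq)
    then show ?thesis
      by (simp add: sum.reindex)
  qed
  also have "\<dots> = (\<Sum>j<k. h (swap_entries x i j))"
    using x by (simp add: ucc_move_entry)
  finally show ?thesis .
qed

definition recolor_energy :: "nat \<Rightarrow> nat \<Rightarrow> (nat list \<Rightarrow> real) \<Rightarrow> real" where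
  "recolor_energy k N g =
     (\<Sum>x\<in>Theta k N. \<Sum>i<k. \<Sum>l\<in>{1..N} - set x. (g x - g (x[i := l]))^2)"

definition swap_energy :: "nat \<Rightarrow> nat \<Rightarrow> (nat list \<Rightarrow> real) \<Rightarrow> real" where
  "swap_energy k N g =
     (\<Sum>x\<in>Theta k N. \<Sum>i<k. \<Sum>j<k. (g x - g (swap_entries x i j))^2)"

lemma dirichlet_form_P_cc:
  "dirichlet_form (Theta k N) (uniform_dist (Theta k N)) (P_cc k N) g =
     recolor_energy k N g / (2 * real (card (Theta k N)) * (real k * (real N - real k + 1)))"
proof -
  have "dirichlet_form (Theta k N) (uniform_dist (Theta k N)) (P_cc k N) g =
      1 / (real k * (real N - real k + 1)) / (2 * real (card (Theta k N))) *
      (\<Sum>x\<in>Theta k N. \<Sum>i<k. \<Sum>l\<in>({1..N} - set x) \<union> {x ! i}. (g x - g (x[i := l]))^2)"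
    by (rule dirichlet_form_uniform_move_kernel[where m = "\<lambda>x i l. x[i := l]"])
      (auto simp: P_cc_def finite_Theta intro: list_update_in_Theta)
  moreover have "(\<Sum>l\<in>({1..N} - set x) \<union> {x ! i}. (g x - g (x[i := l]))^2) =
      (\<Sum>l\<in>{1..N} - set x. (g x - g (x[i := l]))^2)" if "x \<in> Theta k N" "i < k" for x i
    using that by (subst sum.union_disjoint) (auto simp: Theta_length)
  ultimately show ?thesis
    unfolding recolor_energy_def by simp
qed

lemma dirichlet_form_P_ucc:
  "dirichlet_form (Theta k N) (uniform_dist (Theta k N)) (P_ucc k N) g =
     (recolor_energy k N g + swap_energy k N g) / (2 * real (card (Theta k N)) * (real k * real N))"
proof -
  have "ucc_move x i l \<in> Theta k N" if "x \<in> Theta k N" "i < k" "l \<in> {1..N}" for x i l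
  proof (cases "l \<in> set x")
    case True
    then obtain j where "j < k" "l = x ! j"
      using Theta_length[OF \<open>x \<in> Theta k N\<close>] by (auto simp: in_set_conv_nth)
    then show ?thesis
      using that by (simp add: ucc_move_entry swap_entries_in_Theta)
  next
    case False
    then show ?thesis
      using that by (simp add: ucc_move_fresh list_update_in_Theta)
  qed
  then have "dirichlet_form (Theta k N) (uniform_dist (Theta k N)) (P_ucc k N) g =
      1 / (real k * real N) / (2 * real (card (Theta k N))) *
      (\<Sum>x\<in>Theta k N. \<Sum>i<k. \<Sum>l\<in>{1..N}. (g x - g (ucc_move x i l))^2)"
    by (intro dirichlet_form_uniform_move_kernel) (auto simp: P_ucc_def finite_Theta)
  also have "(\<Sum>x\<in>Theta k N. \<Sum>i<k. \<Sum>l\<in>{1..N}. (g x - g (ucc_move x i l))^2) =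
      recolor_energy k N g + swap_energy k N g"
    unfolding recolor_energy_def swap_energy_def sum.distrib[symmetric]
    by (intro sum.cong refl) (erule sum_ucc_moves)
  finally show ?thesis
    by simp
qed

lemma sum_Theta_swap_entries:
  assumes "i < k" "j < k"
  shows "(\<Sum>x\<in>Theta k N. h (swap_entries x i j)) = (\<Sum>x\<in>Theta k N. h x)"
proof -
  have "bij_betw (\<lambda>x. swap_entries x i j) (Theta k N) (Theta k N)"
    using assms
    by (intro bij_betw_byWitness[where f' = "\<lambda>x. swap_entries x i j"])
      (auto simp: swap_entries_involution Theta_length swap_entries_in_Theta)
  then show ?thesis
    by (rule sum.reindex_bij_betw)
qed

lemma sum_Theta_recolor_involution:
  assumes "i < k"
  shows "(\<Sum>x\<in>Theta k N. \<Sum>l\<in>{1..N} - set x. h (x[i := l]) (x ! i)) =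
    (\<Sum>x\<in>Theta k N. \<Sum>l\<in>{1..N} - set x. h x l)"
proof -
  define S where "S = Sigma (Theta k N) (\<lambda>x. {1..N} - set x)"
  define \<phi> :: "nat list \<times> nat \<Rightarrow> nat list \<times> nat" where "\<phi> = (\<lambda>(x, l). (x[i := l], x ! i))"
  have "\<phi> p \<in> S \<and> \<phi> (\<phi> p) = p" if "p \<in> S" for p
  proof -
    obtain x l where p: "p = (x, l)" and x: "x \<in> Theta k N" and l: "l \<in> {1..N} - set x"
      using \<open>p \<in> S\<close> unfolding S_def by blast
    have "distinct x" "set x \<subseteq> {1..N}" "length x = k"
      using x by (auto simp: Theta_def)
    moreover have "x ! i \<in> {1..N}"
      using assms \<open>length x = k\<close> \<open>set x \<subseteq> {1..N}\<close> by (metis nth_mem subsetD)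
    ultimately have "x ! i \<in> {1..N} - set (x[i := l])"
      using assms l by (auto simp: set_update_distinct)
    moreover have "x[i := l] \<in> Theta k N"
      using list_update_in_Theta[OF x assms] l by simp
    ultimately show ?thesis
      using p l assms \<open>length x = k\<close> unfolding S_def \<phi>_def by auto
  qed
  then have "bij_betw \<phi> S S"
    by (intro bij_betw_byWitness[where f' = \<phi>]) auto
  then have "(\<Sum>p\<in>S. case_prod h (\<phi> p)) = (\<Sum>p\<in>S. case_prod h p)"
    by (rule sum.reindex_bij_betw)
  then show ?thesis
    unfolding S_def \<phi>_def by (simp add: sum.Sigma finite_Theta split_beta)
qed

lemma sq_diff_le_three_steps: "((a::real) - d)^2 \<le> 3 * ((a - b)^2 + (b - c)^2 + (d - c)^2)"
proof -
  have "0 \<le> ((a - b) - (b - c))^2 + ((b - c) - (c - d))^2 + ((a - b) - (c - d))^2"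
    by simp
  then show ?thesis
    by (simp add: power2_eq_square algebra_simps)
qed

lemma swap_entries_path_bound:
  fixes g :: "'a list \<Rightarrow> real"
  shows "(g x - g (swap_entries x i j))^2 \<le>
    3 * ((g x - g (x[i := l]))^2 + (g (x[i := l]) - g (x[i := l, j := x ! i]))^2
      + (g (swap_entries x i j) - g ((swap_entries x i j)[i := l]))^2)"
proof (cases "i = j")
  case True
  then show ?thesis
    by (simp add: swap_entries_def)
next
  case False
  then show ?thesis
    using sq_diff_le_three_steps by (simp add: swap_entries_list_update)
qed

text \<open>The middle leg recolors x[i:=l] with the color x!i it has just freed; the involution
  (x, l) \<mapsto> (x[i:=l], x!i) turns these steps into ordinary recolorings.\<close>

lemma path_second_leg_sum:
  "(\<Sum>x\<in>Theta k N. \<Sum>i<k. \<Sum>j<k. \<Sum>l\<in>{1..N} - set x.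
      (g (x[i := l]) - g (x[i := l, j := x ! i]))^2) = real k * recolor_energy k N g"
proof -
  define h where "h y c = (\<Sum>j<k. (g y - g (y[j := c]))^2)" for y c
  have "(\<Sum>x\<in>Theta k N. \<Sum>i<k. \<Sum>j<k. \<Sum>l\<in>{1..N} - set x.
      (g (x[i := l]) - g (x[i := l, j := x ! i]))^2) =
      (\<Sum>i<k. \<Sum>x\<in>Theta k N. \<Sum>l\<in>{1..N} - set x. h (x[i := l]) (x ! i))"
    unfolding h_def
    by (subst sum.swap, rule sum.cong[OF refl], rule sum.cong[OF refl], rule sum.swap)
  also have "\<dots> = (\<Sum>i<k. \<Sum>x\<in>Theta k N. \<Sum>l\<in>{1..N} - set x. h x l)"
    by (rule sum.cong[OF refl], rule sum_Theta_recolor_involution) simp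
  also have "(\<Sum>x\<in>Theta k N. \<Sum>l\<in>{1..N} - set x. h x l) = recolor_energy k N g"
    unfolding recolor_energy_def h_def by (rule sum.cong[OF refl], rule sum.swap)
  finally show ?thesis
    by simp
qed

lemma path_third_leg_sum:
  "(\<Sum>x\<in>Theta k N. \<Sum>i<k. \<Sum>j<k. \<Sum>l\<in>{1..N} - set x.
      (g (swap_entries x i j) - g ((swap_entries x i j)[i := l]))^2) = real k * recolor_energy k N g"
proof -
  define h where "h i y = (\<Sum>l\<in>{1..N} - set y. (g y - g (y[i := l]))^2)" for i y
  have "set (swap_entries x i j) = set x" if "x \<in> Theta k N" "i < k" "j < k" for x i j
    using that by (simp add: swap_entries_def Theta_length)
  then have "(\<Sum>x\<in>Theta k N. \<Sum>i<k. \<Sum>j<k. \<Sum>l\<in>{1..N} - set x.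
      (g (swap_entries x i j) - g ((swap_entries x i j)[i := l]))^2) =
      (\<Sum>x\<in>Theta k N. \<Sum>i<k. \<Sum>j<k. h i (swap_entries x i j))"
    unfolding h_def by simp
  also have "\<dots> = (\<Sum>i<k. \<Sum>j<k. \<Sum>x\<in>Theta k N. h i (swap_entries x i j))"
    by (subst sum.swap, rule sum.cong[OF refl], rule sum.swap)
  also have "\<dots> = (\<Sum>i<k. \<Sum>j<k. \<Sum>x\<in>Theta k N. h i x)"
    by (simp add: sum_Theta_swap_entries)
  also have "\<dots> = real k * (\<Sum>x\<in>Theta k N. \<Sum>i<k. h i x)"
    by (simp add: sum.swap[of _ "Theta k N"] sum_distrib_left)
  also have "(\<Sum>x\<in>Theta k N. \<Sum>i<k. h i x) = recolor_energy k N g"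
    unfolding recolor_energy_def h_def ..
  finally show ?thesis .
qed

lemma swap_energy_le:
  assumes "k < N"
  shows "(real N - real k) * swap_energy k N g \<le> 9 * real k * recolor_energy k N g"
proof -
  have "(real N - real k) * swap_energy k N g =
      (\<Sum>x\<in>Theta k N. \<Sum>i<k. \<Sum>j<k. \<Sum>l\<in>{1..N} - set x. (g x - g (swap_entries x i j))^2)"
    using assms card_Theta_free_colors[of _ k N]
    unfolding swap_energy_def by (simp add: sum_distrib_left of_nat_diff)
  also have "\<dots> \<le> (\<Sum>x\<in>Theta k N. \<Sum>i<k. \<Sum>j<k. \<Sum>l\<in>{1..N} - set x.
      3 * ((g x - g (x[i := l]))^2 + (g (x[i := l]) - g (x[i := l, j := x ! i]))^2
        + (g (swap_entries x i j) - g ((swap_entries x i j)[i := l]))^2))"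
    by (intro sum_mono swap_entries_path_bound)
  also have "\<dots> = 3 * ((\<Sum>x\<in>Theta k N. \<Sum>i<k. \<Sum>j<k. \<Sum>l\<in>{1..N} - set x. (g x - g (x[i := l]))^2)
      + (\<Sum>x\<in>Theta k N. \<Sum>i<k. \<Sum>j<k. \<Sum>l\<in>{1..N} - set x.
          (g (x[i := l]) - g (x[i := l, j := x ! i]))^2)
      + (\<Sum>x\<in>Theta k N. \<Sum>i<k. \<Sum>j<k. \<Sum>l\<in>{1..N} - set x.
          (g (swap_entries x i j) - g ((swap_entries x i j)[i := l]))^2))"
    by (simp only: sum.distrib sum_distrib_left distrib_left)
  also have "(\<Sum>x\<in>Theta k N. \<Sum>i<k. \<Sum>j<k. \<Sum>l\<in>{1..N} - set x. (g x - g (x[i := l]))^2) =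
      real k * recolor_energy k N g"
    unfolding recolor_energy_def by (simp add: sum_distrib_left)
  finally show ?thesis
    unfolding path_second_leg_sum path_third_leg_sum by simp
qed

lemma dirichlet_form_P_ucc_le_P_cc:
  assumes "1 \<le> k" "k < N"
  shows "dirichlet_form (Theta k N) (uniform_dist (Theta k N)) (P_ucc k N) g
     \<le> 19 * dirichlet_form (Theta k N) (uniform_dist (Theta k N)) (P_cc k N) g"
proof -
  define S where "S = recolor_energy k N g"
  define W where "W = swap_energy k N g"
  define m where "m = real N - real k"
  define c where "c = 2 * real (card (Theta k N)) * real k"
  have "S \<ge> 0" "W \<ge> 0"
    unfolding S_def W_def recolor_energy_def swap_energy_def by (simp_all add: sum_nonneg)
  have "m \<ge> 1" "real k \<ge> 1"
    using assms unfolding m_def by auto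
  have "card (Theta k N) > 0"
    using Theta_two_distinct[OF assms] finite_Theta by (auto simp: card_gt_0_iff)
  then have "c > 0"
    using assms unfolding c_def by simp
  have "m * W \<le> 9 * real k * S"
    using swap_energy_le[OF assms(2)] unfolding m_def W_def S_def .
  have "(S + W) * (m + 1) \<le> S * (m + 1) + 2 * (m * W)"
    using mult_left_mono[of "m + 1" "2 * m" W] \<open>W \<ge> 0\<close> \<open>m \<ge> 1\<close> by (simp add: algebra_simps)
  also have "\<dots> \<le> S * (m + 1) + 18 * real k * S"
    using \<open>m * W \<le> 9 * real k * S\<close> by (simp add: ac_simps)
  also have "\<dots> \<le> 19 * S * (m + real k)"
    using mult_nonneg_nonneg[OF \<open>S \<ge> 0\<close>, of "18 * m + real k - 1"] \<open>m \<ge> 1\<close> \<open>real k \<ge> 1\<close>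
    by (simp add: algebra_simps)
  finally have "(S + W) * (m + 1) * c \<le> 19 * S * (m + real k) * c"
    using \<open>c > 0\<close> by (intro mult_right_mono) auto
  then have "(S + W) / (c * (m + real k)) \<le> 19 * (S / (c * (m + 1)))"
    using \<open>c > 0\<close> \<open>m \<ge> 1\<close> \<open>real k \<ge> 1\<close> by (simp add: divide_simps mult_ac)
  moreover have "2 * real (card (Theta k N)) * (real k * real N) = c * (m + real k)"
    "2 * real (card (Theta k N)) * (real k * (real N - real k + 1)) = c * (m + 1)"
    unfolding c_def m_def by simp_all
  ultimately show ?thesis
    unfolding dirichlet_form_P_cc dirichlet_form_P_ucc S_def W_def by simp
qed

theorem mainTheorem7:
  fixes k N :: nat
  assumes "1 \<le> k" and "k < N"
  shows "log_sobolev (Theta k N) (uniform_dist (Theta k N)) (P_cc k N)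
           \<ge> (1/19) * log_sobolev (Theta k N) (uniform_dist (Theta k N)) (P_ucc k N)"
proof (rule log_sobolev_comparison)
  show "finite (Theta k N)"
    by (rule finite_Theta)
  show "\<exists>x\<in>Theta k N. \<exists>y\<in>Theta k N. x \<noteq> y"
    using Theta_two_distinct[OF assms] .
  then show "sum (uniform_dist (Theta k N)) (Theta k N) = 1"
    using finite_Theta by (intro sum_uniform_dist) auto
  show "\<forall>x\<in>Theta k N. uniform_dist (Theta k N) x \<ge> 0"
    by (simp add: uniform_dist_def)
  show "\<forall>x\<in>Theta k N. \<forall>y\<in>Theta k N. P_ucc k N x y \<ge> 0"
    by (simp add: P_ucc_def sum_nonneg)
  show "(0::real) < 19"
    by simp
  show "dirichlet_form (Theta k N) (uniform_dist (Theta k N)) (P_ucc k N) g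
     \<le> 19 * dirichlet_form (Theta k N) (uniform_dist (Theta k N)) (P_cc k N) g" for g
    using dirichlet_form_P_ucc_le_P_cc[OF assms] .
qed

end
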